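(* Let $d\ge1$ and let $\mathfrak{T}:\mathcal{S}(\mathbb{R}^{2d})\to\mathcal{S}'(\mathbb{R}^{2d})$ be a non-zero linear operator such that there is a function $\Phi:\mathbb{R}^{4d}\to\mathbb{R}^{4d}$ (not assumed measurable) with $\mathfrak{T}\rho(\lambda)F=c\,\rho(\Phi(\lambda))\mathfrak{T}F$ for all $\lambda\in\mathbb{R}^{4d}$, $F\in\mathcal{S}(\mathbb{R}^{2d})$ (with constants $c\in\mathbb{C}$ possibly depending on $\lambda$). Assume in addition that either (i) there exists $F\in\mathcal{S}(\mathbb{R}^{2d})$ with $\mathfrak{T}F\neq0$ and $\mathfrak{T}F\in L^p(\mathbb{R}^{2d})$ for some $p<\infty$, or (ii) $\{\mathfrak{T}F:F\in\mathcal{S}(\mathbb{R}^{2d})\}$ is a weak*-dense subspace of $\mathcal{S}'(\mathbb{R}^{2d})$. Then $\Phi$ is additive, i.e., $\Phi(\lambda_1+\lambda_2)=\Phi(\lambda_1)+\Phi(\lambda_2)$ for all $\lambda_1,\lambda_2\in\mathbb{R}^{4d}$.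
   Context: For $x,\omega,t\in\mathbb{R}^{2d}$: $T_xF(t)=F(t-x)$, $M_\omega F(t)=e^{2\pi i\omega\cdot t}F(t)$, and for $(x,\omega)\in\mathbb{R}^{4d}$, $\rho(x,\omega)=T_{x/2}M_\omega T_{x/2}$, acting on $\mathcal{S}(\mathbb{R}^{2d})$ and by duality on $\mathcal{S}'(\mathbb{R}^{2d})$. *)

theory Defs
  imports "HOL-Analysis.Analysis"
begin

text \<open>The ambient space R^{2d} is an abstract Euclidean space 'a with even dimension;
  R^{4d} is 'a \<times> 'a (pairs (x, omega)).  Test functions are complex valued.\<close>

definition dirderiv :: "'a::euclidean_space \<Rightarrow> ('a \<Rightarrow> complex) \<Rightarrow> ('a \<Rightarrow> complex)" where
  "dirderiv v f = (\<lambda>x. vector_derivative (\<lambda>t::real. f (x + t *\<^sub>R v)) (at 0))"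

definition iter_pderiv :: "'a::euclidean_space list \<Rightarrow> ('a \<Rightarrow> complex) \<Rightarrow> ('a \<Rightarrow> complex)" where
  "iter_pderiv vs f = foldr dirderiv vs f"

definition schwartz :: "('a::euclidean_space \<Rightarrow> complex) set" where
  "schwartz = {f. \<forall>vs. set vs \<subseteq> Basis \<longrightarrow>
      (\<forall>x. iter_pderiv vs f differentiable at x) \<and>
      (\<forall>k::nat. bounded (range (\<lambda>x. (1 + norm x) ^ k * cmod (iter_pderiv vs f x))))}"

definition schwartz_seminorm :: "nat \<Rightarrow> ('a::euclidean_space \<Rightarrow> complex) \<Rightarrow> real" where
  "schwartz_seminorm N f =
     (\<Sum>vs\<in>{vs. set vs \<subseteq> Basis \<and> length vs \<le> N}. \<Sum>k\<le>N.
        (SUP x. (1 + norm x) ^ k * cmod (iter_pderiv vs f x)))"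

text \<open>Tempered distributions: continuous linear functionals on the Schwartz space,
  represented extensionally (value 0 outside the Schwartz space).\<close>
definition tempered :: "(('a::euclidean_space \<Rightarrow> complex) \<Rightarrow> complex) set" where
  "tempered = {u. (\<forall>f. f \<notin> schwartz \<longrightarrow> u f = 0) \<and>
      (\<forall>f\<in>schwartz. \<forall>g\<in>schwartz. u (\<lambda>x. f x + g x) = u f + u g) \<and>
      (\<forall>f\<in>schwartz. \<forall>c. u (\<lambda>x. c * f x) = c * u f) \<and>
      (\<exists>C N. \<forall>f\<in>schwartz. cmod (u f) \<le> C * schwartz_seminorm N f)}"

definition transl :: "'a::euclidean_space \<Rightarrow> ('a \<Rightarrow> complex) \<Rightarrow> ('a \<Rightarrow> complex)" where
  "transl x F = (\<lambda>t. F (t - x))"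

definition modul :: "'a::euclidean_space \<Rightarrow> ('a \<Rightarrow> complex) \<Rightarrow> ('a \<Rightarrow> complex)" where
  "modul \<omega> F = (\<lambda>t. exp (2 * of_real pi * \<i> * of_real (\<omega> \<bullet> t)) * F t)"

definition rho :: "'a::euclidean_space \<times> 'a \<Rightarrow> ('a \<Rightarrow> complex) \<Rightarrow> ('a \<Rightarrow> complex)" where
  "rho l = transl ((1/2) *\<^sub>R fst l) \<circ> modul (snd l) \<circ> transl ((1/2) *\<^sub>R fst l)"

text \<open>Extension to tempered distributions by duality (bilinear pairing):
  (T_x u)(f) = u(T_{-x} f), (M_\<omega> u)(f) = u(M_\<omega> f).\<close>
definition transl_dist :: "'a::euclidean_space \<Rightarrow> (('a \<Rightarrow> complex) \<Rightarrow> complex) \<Rightarrow> (('a \<Rightarrow> complex) \<Rightarrow> complex)" where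
  "transl_dist x u = (\<lambda>f. if f \<in> schwartz then u (transl (- x) f) else 0)"

definition modul_dist :: "'a::euclidean_space \<Rightarrow> (('a \<Rightarrow> complex) \<Rightarrow> complex) \<Rightarrow> (('a \<Rightarrow> complex) \<Rightarrow> complex)" where
  "modul_dist \<omega> u = (\<lambda>f. if f \<in> schwartz then u (modul \<omega> f) else 0)"

definition rho_dist :: "'a::euclidean_space \<times> 'a \<Rightarrow> (('a \<Rightarrow> complex) \<Rightarrow> complex) \<Rightarrow> (('a \<Rightarrow> complex) \<Rightarrow> complex)" where
  "rho_dist l = transl_dist ((1/2) *\<^sub>R fst l) \<circ> modul_dist (snd l) \<circ> transl_dist ((1/2) *\<^sub>R fst l)"

definition dist_in_Lp :: "real \<Rightarrow> (('a::euclidean_space \<Rightarrow> complex) \<Rightarrow> complex) \<Rightarrow> bool" where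
  "dist_in_Lp p u \<longleftrightarrow> (\<exists>g::'a \<Rightarrow> complex. g \<in> borel_measurable lborel \<and>
      integrable lborel (\<lambda>x. cmod (g x) powr p) \<and>
      (\<forall>f\<in>schwartz. integrable lborel (\<lambda>x. g x * f x) \<and>
                      u f = (LINT x|lborel. g x * f x)))"

definition weak_star_dense :: "(('a::euclidean_space \<Rightarrow> complex) \<Rightarrow> complex) set \<Rightarrow> bool" where
  "weak_star_dense A \<longleftrightarrow> A \<subseteq> tempered \<and>
     (\<forall>u\<in>tempered. \<forall>fs. finite fs \<longrightarrow> fs \<subseteq> schwartz \<longrightarrow> (\<forall>e>0.
        \<exists>v\<in>A. \<forall>f\<in>fs. cmod (u f - v f) < e))"

end

theory Submission
  imports Defs "HOL-Real_Asymp.Real_Asymp"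
begin

(* Since rho l1 (rho l2 F) is a unimodular multiple of rho (l1 + l2) F, and the dual shifts rho_dist
   compose by the same cocycle, the covariance relation shows that rho_dist applied to the defect
   Phi (l1 + l2) - (Phi l1 + Phi l2) = (x, w) acts on the range of T as a scalar k.
   Under weak*-density this holds on all of S'; testing point evaluations on a Gaussian G gives
   G (y + x) = |k| G y for all y, which forces x = 0 and then w = 0.
   If instead some nonzero T F is an L^p function g, then, as Schwartz functions separate locally
   integrable functions, g (z - x) times a unimodular phase equals k g z almost everywhere.
   Comparing integrals of |g|^p gives |k| = 1; a nonzero integrable function invariant under
   translation by x /= 0 is impossible, so x = 0; and a phase e^(2 pi i w.z) with w /= 0 equals the
   constant k only on a null set of hyperplanes, so w = 0. *)

lemma iter_pderiv_Nil [simp]: "iter_pderiv [] f = f"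
  by (simp add: iter_pderiv_def)

lemma iter_pderiv_Cons [simp]: "iter_pderiv (v # vs) f = dirderiv v (iter_pderiv vs f)"
  by (simp add: iter_pderiv_def)

lemma dirderiv_eq_derivative:
  assumes "(f has_derivative f') (at x)"
  shows "dirderiv v f x = f' v"
proof -
  have line: "((\<lambda>t::real. x + t *\<^sub>R v) has_derivative (\<lambda>t. t *\<^sub>R v)) (at 0)"
    by (intro derivative_eq_intros) auto
  have "((\<lambda>t. f (x + t *\<^sub>R v)) has_derivative (\<lambda>t. f' (t *\<^sub>R v))) (at 0)"
    by (rule has_derivative_compose[OF line]) (simp add: assms)
  moreover have "(\<lambda>t. f' (t *\<^sub>R v)) = (\<lambda>t. t *\<^sub>R f' v)"
    using has_derivative_linear[OF assms] by (simp add: linear_scale)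
  ultimately have "((\<lambda>t. f (x + t *\<^sub>R v)) has_vector_derivative f' v) (at 0)"
    by (simp add: has_vector_derivative_def)
  then show ?thesis
    unfolding dirderiv_def by (simp add: vector_derivative_at)
qed

lemma dirderiv_add:
  assumes "f differentiable at x" "g differentiable at x"
  shows "dirderiv v (\<lambda>y. f y + g y) x = dirderiv v f x + dirderiv v g x"
proof -
  obtain f' g' where f': "(f has_derivative f') (at x)" and g': "(g has_derivative g') (at x)"
    using assms unfolding differentiable_def by blast
  have "((\<lambda>y. f y + g y) has_derivative (\<lambda>h. f' h + g' h)) (at x)"
    by (intro derivative_intros f' g')
  then show ?thesis
    using dirderiv_eq_derivative f' g' by metis
qed

lemma dirderiv_cmult:
  assumes "f differentiable at x"
  shows "dirderiv v (\<lambda>y. c * f y) x = c * dirderiv v f x"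
proof -
  obtain f' where f': "(f has_derivative f') (at x)"
    using assms unfolding differentiable_def by blast
  have "((\<lambda>y. c * f y) has_derivative (\<lambda>h. c * f' h)) (at x)"
    by (intro derivative_intros f')
  then show ?thesis
    using dirderiv_eq_derivative f' by metis
qed

lemma schwartzI:
  assumes "\<And>vs x. set vs \<subseteq> Basis \<Longrightarrow> iter_pderiv vs f differentiable at x"
    and "\<And>vs k. set vs \<subseteq> Basis \<Longrightarrow> \<exists>B. \<forall>x. (1 + norm x) ^ k * cmod (iter_pderiv vs f x) \<le> B"
  shows "f \<in> schwartz"
  unfolding schwartz_def bounded_iff
  using assms by (fastforce intro: order_trans)

lemma schwartz_differentiable:
  assumes "f \<in> schwartz" "set vs \<subseteq> Basis"
  shows "iter_pderiv vs f differentiable at x"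
  using assms unfolding schwartz_def by auto

lemma schwartz_decay:
  assumes "f \<in> schwartz" "set vs \<subseteq> Basis"
  shows "\<exists>B. \<forall>x. (1 + norm x) ^ k * cmod (iter_pderiv vs f x) \<le> B"
proof -
  have "bounded (range (\<lambda>x. (1 + norm x) ^ k * cmod (iter_pderiv vs f x)))"
    using assms unfolding schwartz_def by auto
  then show ?thesis
    unfolding bounded_iff by (auto intro: order_trans[OF abs_ge_self])
qed

lemma schwartz_if_derivative_closed:
  assumes "f \<in> C"
    and differentiable: "\<And>g x. g \<in> C \<Longrightarrow> g differentiable at x"
    and dirderiv: "\<And>g v. g \<in> C \<Longrightarrow> v \<in> Basis \<Longrightarrow> dirderiv v g \<in> C"
    and decay: "\<And>g k. g \<in> C \<Longrightarrow> \<exists>B. \<forall>x. (1 + norm x) ^ k * cmod (g x) \<le> B"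
  shows "f \<in> schwartz"
proof -
  have "iter_pderiv vs f \<in> C" if "set vs \<subseteq> Basis" for vs
    using that by (induction vs) (auto simp: assms(1) dirderiv)
  then show ?thesis
    by (intro schwartzI differentiable decay)
qed

lemma iter_pderiv_add:
  assumes "f \<in> schwartz" "g \<in> schwartz" "set vs \<subseteq> Basis"
  shows "iter_pderiv vs (\<lambda>x. f x + g x) = (\<lambda>x. iter_pderiv vs f x + iter_pderiv vs g x)"
  using assms(3)
proof (induction vs)
  case (Cons v vs)
  then have IH: "iter_pderiv vs (\<lambda>x. f x + g x) = (\<lambda>x. iter_pderiv vs f x + iter_pderiv vs g x)"
    and "set vs \<subseteq> Basis"
    by auto
  then show ?case
    by (simp add: IH fun_eq_iff dirderiv_add schwartz_differentiable assms(1,2))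
qed simp

lemma iter_pderiv_cmult:
  assumes "f \<in> schwartz" "set vs \<subseteq> Basis"
  shows "iter_pderiv vs (\<lambda>x. c * f x) = (\<lambda>x. c * iter_pderiv vs f x)"
  using assms(2)
proof (induction vs)
  case (Cons v vs)
  then have IH: "iter_pderiv vs (\<lambda>x. c * f x) = (\<lambda>x. c * iter_pderiv vs f x)"
    and "set vs \<subseteq> Basis"
    by auto
  then show ?case
    by (simp add: IH fun_eq_iff dirderiv_cmult schwartz_differentiable assms(1))
qed simp

lemma decay_add:
  fixes f g :: "'a::real_normed_vector \<Rightarrow> complex"
  assumes "\<exists>B. \<forall>x. (1 + norm x) ^ k * cmod (f x) \<le> B" "\<exists>B. \<forall>x. (1 + norm x) ^ k * cmod (g x) \<le> B"
  shows "\<exists>B. \<forall>x. (1 + norm x) ^ k * cmod (f x + g x) \<le> B"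
proof -
  obtain B1 B2 where B1: "\<forall>x. (1 + norm x) ^ k * cmod (f x) \<le> B1"
    and B2: "\<forall>x. (1 + norm x) ^ k * cmod (g x) \<le> B2"
    using assms by blast
  have "(1 + norm x) ^ k * cmod (f x + g x) \<le> B1 + B2" for x
  proof -
    have "(1 + norm x) ^ k * cmod (f x + g x) \<le> (1 + norm x) ^ k * (cmod (f x) + cmod (g x))"
      by (intro mult_left_mono norm_triangle_ineq) auto
    also have "\<dots> \<le> B1 + B2"
      using B1 B2 by (simp add: distrib_left add_mono)
    finally show ?thesis .
  qed
  then show ?thesis
    by blast
qed

lemma decay_cmult:
  fixes f :: "'a::real_normed_vector \<Rightarrow> complex"
  assumes "\<exists>B. \<forall>x. (1 + norm x) ^ k * cmod (f x) \<le> B"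
  shows "\<exists>B. \<forall>x. (1 + norm x) ^ k * cmod (c * f x) \<le> B"
proof -
  obtain B where B: "\<forall>x. (1 + norm x) ^ k * cmod (f x) \<le> B"
    using assms by blast
  have "(1 + norm x) ^ k * cmod (c * f x) \<le> cmod c * B" for x
    using mult_left_mono[OF spec[OF B, of x], of "cmod c"] by (simp add: norm_mult mult_ac)
  then show ?thesis
    by blast
qed

lemma schwartz_add:
  assumes "f \<in> schwartz" "g \<in> schwartz"
  shows "(\<lambda>x. f x + g x) \<in> schwartz"
  using assms
  by (intro schwartzI)
     (simp_all add: iter_pderiv_add differentiable_add schwartz_differentiable decay_add schwartz_decay)

lemma schwartz_cmult:
  assumes "f \<in> schwartz"
  shows "(\<lambda>x. c * f x) \<in> schwartz"
  using assms
  by (intro schwartzI)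
     (simp_all add: iter_pderiv_cmult differentiable_mult schwartz_differentiable decay_cmult schwartz_decay)

lemma iter_pderiv_transl: "iter_pderiv vs (transl a f) = transl a (iter_pderiv vs f)"
proof -
  have "dirderiv v (transl a g) = transl a (dirderiv v g)" for v and g :: "'a \<Rightarrow> complex"
    unfolding dirderiv_def transl_def by (simp add: algebra_simps)
  then show ?thesis
    by (induction vs) simp_all
qed

lemma one_plus_norm_le_mult: "1 + norm x \<le> (1 + norm a) * (1 + norm (x - a))"
proof -
  have "norm x \<le> norm a + norm (x - a)"
    using norm_triangle_ineq[of a "x - a"] by simp
  moreover have "(1 + norm a) * (1 + norm (x - a)) = 1 + norm a + norm (x - a) + norm a * norm (x - a)"
    by (simp add: algebra_simps)
  ultimately show ?thesis
    using mult_nonneg_nonneg[OF norm_ge_zero norm_ge_zero, of a "x - a"] by linarith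
qed

lemma schwartz_transl:
  assumes f: "f \<in> schwartz"
  shows "transl a f \<in> schwartz"
proof (rule schwartzI)
  fix vs :: "'a list" and x assume vs: "set vs \<subseteq> Basis"
  have "(iter_pderiv vs f \<circ> (\<lambda>x. x - a)) differentiable at x"
    by (intro differentiable_chain_at schwartz_differentiable[OF f vs] derivative_intros)
  then show "iter_pderiv vs (transl a f) differentiable at x"
    unfolding iter_pderiv_transl by (simp add: transl_def o_def)
next
  fix vs :: "'a list" and k assume vs: "set vs \<subseteq> Basis"
  obtain B where B: "\<forall>x. (1 + norm x) ^ k * cmod (iter_pderiv vs f x) \<le> B"
    using schwartz_decay[OF f vs] by blast
  have "(1 + norm x) ^ k * cmod (iter_pderiv vs (transl a f) x) \<le> (1 + norm a) ^ k * B" for x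
  proof -
    have "(1 + norm x) ^ k * cmod (iter_pderiv vs f (x - a))
        \<le> ((1 + norm a) * (1 + norm (x - a))) ^ k * cmod (iter_pderiv vs f (x - a))"
      by (intro mult_right_mono power_mono one_plus_norm_le_mult) auto
    also have "\<dots> = (1 + norm a) ^ k * ((1 + norm (x - a)) ^ k * cmod (iter_pderiv vs f (x - a)))"
      by (simp add: power_mult_distrib)
    also have "\<dots> \<le> (1 + norm a) ^ k * B"
      using B by (intro mult_left_mono) auto
    finally show ?thesis
      unfolding iter_pderiv_transl by (simp add: transl_def)
  qed
  then show "\<exists>B. \<forall>x. (1 + norm x) ^ k * cmod (iter_pderiv vs (transl a f) x) \<le> B"
    by blast
qed

definition e2pi :: "real \<Rightarrow> complex" where
  "e2pi t = exp (2 * of_real pi * \<i> * of_real t)"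

lemma e2pi_add: "e2pi (s + t) = e2pi s * e2pi t"
  unfolding e2pi_def by (simp add: distrib_left exp_add)

lemma e2pi_zero [simp]: "e2pi 0 = 1"
  by (simp add: e2pi_def)

lemma norm_e2pi [simp]: "norm (e2pi t) = 1"
proof -
  have "e2pi t = exp (\<i> * of_real (2 * pi * t))"
    unfolding e2pi_def by (simp add: algebra_simps)
  then show ?thesis
    by (simp only: norm_exp_i_times)
qed

lemma e2pi_nonzero [simp]: "e2pi t \<noteq> 0"
  by (simp add: e2pi_def)

lemma e2pi_half: "e2pi (1/2) = -1"
  by (simp add: e2pi_def)

lemma borel_measurable_e2pi [measurable]: "e2pi \<in> borel_measurable borel"
  unfolding e2pi_def by (intro borel_measurable_continuous_onI continuous_intros)

lemma has_derivative_e2pi_inner: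
  "((\<lambda>y. e2pi (w \<bullet> y)) has_derivative (\<lambda>h. e2pi (w \<bullet> x) * (2 * of_real pi * \<i> * of_real (w \<bullet> h)))) (at x)"
  unfolding e2pi_def
  by (rule has_derivative_compose[of "\<lambda>y. 2 * of_real pi * \<i> * of_real (w \<bullet> y)"
        "\<lambda>h. 2 * of_real pi * \<i> * of_real (w \<bullet> h)" _ _ exp "\<lambda>h. exp _ * h"])
     (auto intro!: derivative_eq_intros simp: has_field_derivative_def[symmetric])

inductive_set modulated_derivatives :: "'a::euclidean_space \<Rightarrow> ('a \<Rightarrow> complex) \<Rightarrow> ('a \<Rightarrow> complex) set"
  for w f where
  scaled: "set vs \<subseteq> Basis \<Longrightarrow> (\<lambda>y. c * e2pi (w \<bullet> y) * iter_pderiv vs f y) \<in> modulated_derivatives w f"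
| add: "g \<in> modulated_derivatives w f \<Longrightarrow> h \<in> modulated_derivatives w f \<Longrightarrow>
    (\<lambda>y. g y + h y) \<in> modulated_derivatives w f"

lemma has_derivative_modulated:
  assumes "(f has_derivative f') (at x)"
  shows "((\<lambda>y. c * e2pi (w \<bullet> y) * f y) has_derivative
     (\<lambda>h. c * e2pi (w \<bullet> x) * (2 * of_real pi * \<i> * of_real (w \<bullet> h) * f x + f' h))) (at x)"
  by (rule has_derivative_eq_rhs[OF has_derivative_mult[OF has_derivative_mult[OF
        has_derivative_const has_derivative_e2pi_inner] assms]])
     (auto simp: algebra_simps fun_eq_iff)

lemma modulated_derivatives_differentiable:
  assumes "f \<in> schwartz" "g \<in> modulated_derivatives w f"
  shows "g differentiable at x"
  using assms(2)
proof induction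
  case (scaled vs c)
  then obtain D where "(iter_pderiv vs f has_derivative D) (at x)"
    using schwartz_differentiable[OF assms(1)] unfolding differentiable_def by blast
  then show ?case
    using has_derivative_modulated unfolding differentiable_def by blast
qed (rule differentiable_add)

lemma modulated_derivatives_decay:
  assumes "f \<in> schwartz" "g \<in> modulated_derivatives w f"
  shows "\<exists>B. \<forall>x. (1 + norm x) ^ k * cmod (g x) \<le> B"
  using assms(2)
proof induction
  case (scaled vs c)
  have "\<exists>B. \<forall>x. (1 + norm x) ^ k * cmod (c * iter_pderiv vs f x) \<le> B"
    by (rule decay_cmult[OF schwartz_decay[OF assms(1) scaled]])
  then show ?case
    by (simp add: norm_mult)
qed (rule decay_add)

lemma dirderiv_modulated_derivatives:
  assumes f: "f \<in> schwartz" and g: "g \<in> modulated_derivatives w f" and v: "v \<in> Basis"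
  shows "dirderiv v g \<in> modulated_derivatives w f"
  using g
proof induction
  case (scaled vs c)
  let ?D = "iter_pderiv vs f"
  have "dirderiv v (\<lambda>y. c * e2pi (w \<bullet> y) * ?D y) x =
      (c * (2 * of_real pi * \<i> * of_real (w \<bullet> v))) * e2pi (w \<bullet> x) * ?D x
      + c * e2pi (w \<bullet> x) * iter_pderiv (v # vs) f x" for x
  proof -
    obtain D' where D': "(?D has_derivative D') (at x)"
      using schwartz_differentiable[OF f scaled] unfolding differentiable_def by blast
    show ?thesis
      using dirderiv_eq_derivative[OF has_derivative_modulated[OF D']] dirderiv_eq_derivative[OF D', of v]
      by (simp add: algebra_simps)
  qed
  then have "dirderiv v (\<lambda>y. c * e2pi (w \<bullet> y) * ?D y) =
      (\<lambda>y. (\<lambda>y. (c * (2 * of_real pi * \<i> * of_real (w \<bullet> v))) * e2pi (w \<bullet> y) * ?D y) y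
         + (\<lambda>y. c * e2pi (w \<bullet> y) * iter_pderiv (v # vs) f y) y)"
    by auto
  moreover have "(\<lambda>y. c * e2pi (w \<bullet> y) * iter_pderiv (v # vs) f y) \<in> modulated_derivatives w f"
    using scaled v by (intro modulated_derivatives.scaled) simp
  ultimately show ?case
    by (simp only:) (rule modulated_derivatives.add[OF modulated_derivatives.scaled[OF scaled]])
next
  case (add g h)
  have "dirderiv v (\<lambda>y. g y + h y) = (\<lambda>y. dirderiv v g y + dirderiv v h y)"
    using dirderiv_add modulated_derivatives_differentiable[OF f] add.hyps by blast
  then show ?case
    using add.IH by (simp add: modulated_derivatives.add)
qed

lemma schwartz_modul:
  assumes f: "f \<in> schwartz"
  shows "modul w f \<in> schwartz"
proof (rule schwartz_if_derivative_closed[of _ "modulated_derivatives w f"])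
  have "(\<lambda>y. 1 * e2pi (w \<bullet> y) * iter_pderiv [] f y) \<in> modulated_derivatives w f"
    by (rule modulated_derivatives.scaled) simp
  then show "modul w f \<in> modulated_derivatives w f"
    by (simp add: modul_def e2pi_def)
qed (use f modulated_derivatives_differentiable modulated_derivatives_decay
      dirderiv_modulated_derivatives in blast)+

lemma schwartz_rho:
  assumes "f \<in> schwartz"
  shows "rho l f \<in> schwartz"
  using assms unfolding rho_def by (simp add: schwartz_transl schwartz_modul)

lemma rho_apply: "rho (x, w) F = (\<lambda>t. e2pi (w \<bullet> (t - (1/2) *\<^sub>R x)) * F (t - x))"
proof
  fix t :: 'a
  have half: "t - (1/2) *\<^sub>R x - (1/2) *\<^sub>R x = t - x"
    by (simp add: algebra_simps flip: scaleR_add_left)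
  show "rho (x, w) F t = e2pi (w \<bullet> (t - (1/2) *\<^sub>R x)) * F (t - x)"
    unfolding rho_def transl_def modul_def e2pi_def o_def fst_conv snd_conv half ..
qed

definition rho_cocycle :: "'a::euclidean_space \<times> 'a \<Rightarrow> 'a \<times> 'a \<Rightarrow> complex" where
  "rho_cocycle l1 l2 = e2pi ((snd l1 \<bullet> fst l2 - snd l2 \<bullet> fst l1) / 2)"

lemma rho_cocycle_nonzero [simp]: "rho_cocycle l1 l2 \<noteq> 0"
  by (simp add: rho_cocycle_def)

lemma rho_cocycle_uminus [simp]: "rho_cocycle l (- l) = 1"
  by (simp add: rho_cocycle_def)

lemma rho_cocycle_uminus_left [simp]: "rho_cocycle (- l) l = 1"
  by (simp add: rho_cocycle_def)

lemma rho_compose: "rho l1 (rho l2 F) = (\<lambda>t. rho_cocycle l1 l2 * rho (l1 + l2) F t)"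
proof -
  obtain x1 w1 x2 w2 where l: "l1 = (x1, w1)" "l2 = (x2, w2)"
    by (cases l1, cases l2)
  have "w1 \<bullet> (t - (1/2) *\<^sub>R x1) + w2 \<bullet> (t - x1 - (1/2) *\<^sub>R x2) =
      (w1 \<bullet> x2 - w2 \<bullet> x1) / 2 + (w1 + w2) \<bullet> (t - (1/2) *\<^sub>R (x1 + x2))" for t
    by (simp add: inner_diff_right inner_add_left inner_add_right inner_commute algebra_simps)
       (simp add: field_simps)
  then have "e2pi (w1 \<bullet> (t - (1/2) *\<^sub>R x1)) * e2pi (w2 \<bullet> (t - x1 - (1/2) *\<^sub>R x2)) =
      e2pi ((w1 \<bullet> x2 - w2 \<bullet> x1) / 2) * e2pi ((w1 + w2) \<bullet> (t - (1/2) *\<^sub>R (x1 + x2)))" for t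
    by (simp only: e2pi_add[symmetric])
  then show ?thesis
    unfolding l by (simp add: rho_apply rho_cocycle_def diff_diff_eq mult.assoc[symmetric])
qed

lemma rho_zero: "rho 0 F = F"
  by (simp add: zero_prod_def rho_apply)

lemma rho_inverse: "rho l (rho (- l) F) = F"
  by (simp add: rho_compose rho_zero)

lemma temperedD:
  assumes "u \<in> tempered"
  shows tempered_outside: "f \<notin> schwartz \<Longrightarrow> u f = 0"
    and tempered_cmult: "f \<in> schwartz \<Longrightarrow> u (\<lambda>x. c * f x) = c * u f"
  using assms unfolding tempered_def by auto

lemma rho_dist_apply:
  "rho_dist l u f = (if f \<in> schwartz then u (rho (- fst l, snd l) f) else 0)"
  by (auto simp: rho_dist_def transl_dist_def modul_dist_def rho_def schwartz_transl schwartz_modul)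

(* Transposition reverses the order of composition and flips the sign of the translation part;
   the two effects cancel in the cocycle. *)

lemma rho_dist_compose:
  assumes u: "u \<in> tempered"
  shows "rho_dist l1 (rho_dist l2 u) = (\<lambda>f. rho_cocycle l1 l2 * rho_dist (l1 + l2) u f)"
proof
  fix f :: "'a \<Rightarrow> complex"
  show "rho_dist l1 (rho_dist l2 u) f = rho_cocycle l1 l2 * rho_dist (l1 + l2) u f"
  proof (cases "f \<in> schwartz")
    case True
    have "rho_cocycle (- fst l2, snd l2) (- fst l1, snd l1) = rho_cocycle l1 l2"
      by (simp add: rho_cocycle_def algebra_simps)
    then show ?thesis
      using True tempered_cmult[OF u schwartz_rho[OF True]]
      by (simp add: rho_dist_apply schwartz_rho rho_compose add.commute)
  qed (simp add: rho_dist_apply)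
qed

lemma rho_dist_cmult: "rho_dist l (\<lambda>f. c * u f) = (\<lambda>f. c * rho_dist l u f)"
  by (auto simp: rho_dist_apply fun_eq_iff)

lemma rho_dist_zero:
  assumes "u \<in> tempered"
  shows "rho_dist 0 u = u"
  using tempered_outside[OF assms]
  by (auto simp: rho_dist_apply fun_eq_iff rho_zero[unfolded zero_prod_def])

lemma covariance_factor_nonzero:
  assumes "F0 \<in> schwartz" "T F0 \<noteq> (\<lambda>f. 0)"
    and "\<forall>F\<in>schwartz. T (rho l F) = (\<lambda>f. c * rho_dist m (T F) f)"
  shows "c \<noteq> 0"
proof
  assume "c = 0"
  then have "T (rho l (rho (- l) F0)) = (\<lambda>f. 0)"
    using assms(1,3) schwartz_rho[OF assms(1)] by simp
  then show False
    using assms(2) by (simp add: rho_inverse)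
qed

lemma rho_dist_additivity_defect:
  fixes T :: "('a::euclidean_space \<Rightarrow> complex) \<Rightarrow> (('a \<Rightarrow> complex) \<Rightarrow> complex)"
    and \<Phi> :: "'a \<times> 'a \<Rightarrow> 'a \<times> 'a"
  assumes maps: "\<forall>F\<in>schwartz. T F \<in> tempered"
    and lin_smult: "\<forall>F\<in>schwartz. \<forall>c. T (\<lambda>x. c * F x) = (\<lambda>f. c * T F f)"
    and nonzero: "\<exists>F\<in>schwartz. T F \<noteq> (\<lambda>f. 0)"
    and covar: "\<forall>l. \<exists>c::complex. \<forall>F\<in>schwartz. T (rho l F) = (\<lambda>f. c * rho_dist (\<Phi> l) (T F) f)"
  shows "\<exists>k. \<forall>F\<in>schwartz. rho_dist (\<Phi> (l1 + l2) - (\<Phi> l1 + \<Phi> l2)) (T F) = (\<lambda>f. k * T F f)"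
proof -
  obtain F0 where F0: "F0 \<in> schwartz" "T F0 \<noteq> (\<lambda>f. 0)"
    using nonzero by blast
  obtain c1 c2 c3 where
    c1: "\<forall>F\<in>schwartz. T (rho l1 F) = (\<lambda>f. c1 * rho_dist (\<Phi> l1) (T F) f)" and
    c2: "\<forall>F\<in>schwartz. T (rho l2 F) = (\<lambda>f. c2 * rho_dist (\<Phi> l2) (T F) f)" and
    c3: "\<forall>F\<in>schwartz. T (rho (l1 + l2) F) = (\<lambda>f. c3 * rho_dist (\<Phi> (l1 + l2)) (T F) f)"
    using covar by metis
  define \<mu> where "\<mu> = \<Phi> (l1 + l2)"
  define \<nu> where "\<nu> = \<Phi> l1 + \<Phi> l2"
  define \<alpha> where "\<alpha> = rho_cocycle l1 l2 * c3 * rho_cocycle (- \<nu>) \<mu>"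
  define \<beta> where "\<beta> = c1 * c2 * rho_cocycle (\<Phi> l1) (\<Phi> l2)"
  have \<beta>_nonzero: "\<beta> \<noteq> 0"
    using covariance_factor_nonzero[of F0 T, OF F0] c1 c2 by (simp add: \<beta>_def)
  have eigen: "\<alpha> * rho_dist (\<mu> - \<nu>) (T F) f = \<beta> * T F f" if F: "F \<in> schwartz" for F f
  proof -
    have u: "T F \<in> tempered"
      using maps F by blast
    have "T (rho l1 (rho l2 F)) = (\<lambda>f. c1 * rho_dist (\<Phi> l1) (T (rho l2 F)) f)"
      using c1 schwartz_rho[OF F] by blast
    also have "\<dots> = (\<lambda>f. \<beta> * rho_dist \<nu> (T F) f)"
      using c2 F by (simp add: rho_dist_cmult rho_dist_compose[OF u] \<beta>_def \<nu>_def mult.assoc)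
    finally have "T (rho l1 (rho l2 F)) = (\<lambda>f. \<beta> * rho_dist \<nu> (T F) f)" .
    moreover have "T (rho l1 (rho l2 F)) = (\<lambda>f. rho_cocycle l1 l2 * c3 * rho_dist \<mu> (T F) f)"
      using lin_smult c3 F schwartz_rho[OF F, of "l1 + l2"] by (simp add: rho_compose \<mu>_def mult.assoc)
    ultimately have "rho_dist (- \<nu>) (\<lambda>f. rho_cocycle l1 l2 * c3 * rho_dist \<mu> (T F) f) =
        rho_dist (- \<nu>) (\<lambda>f. \<beta> * rho_dist \<nu> (T F) f)"
      by simp
    then have "(\<lambda>f. \<alpha> * rho_dist (\<mu> - \<nu>) (T F) f) = (\<lambda>f. \<beta> * T F f)"
      by (simp add: rho_dist_cmult rho_dist_compose[OF u] rho_dist_zero[OF u] \<alpha>_def mult.assoc)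
    then show ?thesis
      by metis
  qed
  have "\<alpha> \<noteq> 0"
    using eigen[OF F0(1)] F0(2) \<beta>_nonzero by auto
  then have "\<forall>F\<in>schwartz. rho_dist (\<mu> - \<nu>) (T F) = (\<lambda>f. \<beta> / \<alpha> * T F f)"
    using eigen by (simp add: fun_eq_iff field_simps)
  then show ?thesis
    unfolding \<mu>_def \<nu>_def by blast
qed

inductive_set poly_fun :: "('a::euclidean_space \<Rightarrow> complex) set" where
  const: "(\<lambda>y. c) \<in> poly_fun"
| inner: "(\<lambda>y. of_real (v \<bullet> y)) \<in> poly_fun"
| add: "p \<in> poly_fun \<Longrightarrow> q \<in> poly_fun \<Longrightarrow> (\<lambda>y. p y + q y) \<in> poly_fun"
| mult: "p \<in> poly_fun \<Longrightarrow> q \<in> poly_fun \<Longrightarrow> (\<lambda>y. p y * q y) \<in> poly_fun"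

lemma poly_fun_sum:
  assumes "finite I" "\<And>i. i \<in> I \<Longrightarrow> p i \<in> poly_fun"
  shows "(\<lambda>y. \<Sum>i\<in>I. p i y) \<in> poly_fun"
  using assms
  by (induction I rule: finite_induct) (auto intro: poly_fun.intros)

lemma poly_fun_power:
  assumes "p \<in> poly_fun"
  shows "(\<lambda>y. p y ^ n) \<in> poly_fun"
  by (induction n) (auto intro: poly_fun.intros assms)

lemma poly_fun_inner_self: "(\<lambda>y. of_real (y \<bullet> y)) \<in> poly_fun"
proof -
  have "(\<lambda>y. of_real (y \<bullet> y)) = (\<lambda>y::'a. \<Sum>b\<in>Basis. complex_of_real (b \<bullet> y) * of_real (b \<bullet> y))"
    by (simp add: euclidean_inner[of y y for y] inner_commute flip: of_real_mult)
  also have "\<dots> \<in> poly_fun"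
    by (intro poly_fun_sum poly_fun.intros) auto
  finally show ?thesis .
qed

lemma poly_fun_has_derivative:
  assumes "p \<in> poly_fun"
  shows "\<exists>D. (\<forall>x. (p has_derivative D x) (at x)) \<and> (\<forall>v. (\<lambda>x. D x v) \<in> poly_fun)"
  using assms
proof induction
  case (const c)
  show ?case
    by (rule exI[of _ "\<lambda>x h. 0"]) (auto intro: poly_fun.const)
next
  case (inner v)
  have "((\<lambda>y. of_real (v \<bullet> y)) has_derivative (\<lambda>h. of_real (v \<bullet> h))) (at x)" for x :: 'a
    by (intro derivative_eq_intros) auto
  then show ?case
    by (intro exI[of _ "\<lambda>x h. of_real (v \<bullet> h)"]) (auto intro: poly_fun.const)
next
  case (add p q)
  then obtain Dp Dq where "\<forall>x. (p has_derivative Dp x) (at x)" "\<forall>v. (\<lambda>x. Dp x v) \<in> poly_fun"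
    and "\<forall>x. (q has_derivative Dq x) (at x)" "\<forall>v. (\<lambda>x. Dq x v) \<in> poly_fun"
    by blast
  then show ?case
    by (intro exI[of _ "\<lambda>x h. Dp x h + Dq x h"]) (auto intro: has_derivative_add poly_fun.add)
next
  case (mult p q)
  then obtain Dp Dq where "\<forall>x. (p has_derivative Dp x) (at x)" "\<forall>v. (\<lambda>x. Dp x v) \<in> poly_fun"
    and "\<forall>x. (q has_derivative Dq x) (at x)" "\<forall>v. (\<lambda>x. Dq x v) \<in> poly_fun"
    by blast
  moreover have "(\<lambda>x. p x * Dq x v + Dp x v * q x) \<in> poly_fun" for v
    using mult.hyps \<open>\<forall>v. (\<lambda>x. Dp x v) \<in> poly_fun\<close> \<open>\<forall>v. (\<lambda>x. Dq x v) \<in> poly_fun\<close>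
    by (simp add: poly_fun.add poly_fun.mult)
  ultimately show ?case
    by (intro exI[of _ "\<lambda>x h. p x * Dq x h + Dp x h * q x"]) (auto intro: has_derivative_mult)
qed

lemma poly_fun_growth:
  assumes "p \<in> poly_fun"
  shows "\<exists>C m. 0 \<le> C \<and> (\<forall>y. cmod (p y) \<le> C * (1 + norm y) ^ m)"
  using assms
proof induction
  case (const c)
  show ?case
    by (rule exI[of _ "cmod c"], rule exI[of _ 0]) auto
next
  case (inner v)
  have "cmod (of_real (v \<bullet> y)) \<le> norm v * (1 + norm y) ^ 1" for y :: 'a
    using Cauchy_Schwarz_ineq2[of v y] mult_left_mono[of "norm y" "1 + norm y" "norm v"] by simp
  then show ?case
    by (intro exI[of _ "norm v"] exI[of _ 1]) auto
next
  case (add p q)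
  then obtain C1 m1 C2 m2 where C1: "0 \<le> C1" "\<forall>y. cmod (p y) \<le> C1 * (1 + norm y) ^ m1"
    and C2: "0 \<le> C2" "\<forall>y. cmod (q y) \<le> C2 * (1 + norm y) ^ m2"
    by blast
  have "cmod (p y + q y) \<le> (C1 + C2) * (1 + norm y) ^ (m1 + m2)" for y
  proof -
    have "cmod (p y + q y) \<le> C1 * (1 + norm y) ^ m1 + C2 * (1 + norm y) ^ m2"
      using C1 C2 norm_triangle_ineq[of "p y" "q y"] by (smt (verit))
    also have "\<dots> \<le> C1 * (1 + norm y) ^ (m1 + m2) + C2 * (1 + norm y) ^ (m1 + m2)"
      using C1 C2 by (intro add_mono mult_left_mono power_increasing) auto
    finally show ?thesis
      by (simp add: algebra_simps)
  qed
  then show ?case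
    using C1 C2 by (intro exI[of _ "C1 + C2"] exI[of _ "m1 + m2"]) auto
next
  case (mult p q)
  then obtain C1 m1 C2 m2 where C1: "0 \<le> C1" "\<forall>y. cmod (p y) \<le> C1 * (1 + norm y) ^ m1"
    and C2: "0 \<le> C2" "\<forall>y. cmod (q y) \<le> C2 * (1 + norm y) ^ m2"
    by blast
  have "cmod (p y * q y) \<le> (C1 * C2) * (1 + norm y) ^ (m1 + m2)" for y
    using mult_mono[OF spec[OF C1(2), of y] spec[OF C2(2), of y]] C1(1)
    by (simp add: norm_mult algebra_simps power_add)
  then show ?case
    using C1 C2 by (intro exI[of _ "C1 * C2"] exI[of _ "m1 + m2"]) auto
qed

lemma power_times_gaussian_bounded:
  fixes B :: real
  assumes "B > 0"
  shows "\<exists>K. \<forall>t\<ge>0. (1 + t) ^ n * exp (- B * t\<^sup>2) \<le> K"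
proof -
  have "((\<lambda>t. (1 + t) ^ n * exp (- B * t\<^sup>2)) \<longlongrightarrow> 0) at_top"
    using assms by real_asymp
  then have "\<forall>\<^sub>F t in at_top. (1 + t) ^ n * exp (- B * t\<^sup>2) < 1"
    by (rule order_tendstoD) simp
  then obtain T where T: "\<forall>t\<ge>T. (1 + t) ^ n * exp (- B * t\<^sup>2) < 1"
    unfolding eventually_at_top_linorder by blast
  have "(1 + t) ^ n * exp (- B * t\<^sup>2) \<le> max 1 ((1 + T) ^ n)" if "t \<ge> 0" for t
  proof (cases "t \<ge> T")
    case False
    have "(1 + t) ^ n * exp (- B * t\<^sup>2) \<le> (1 + t) ^ n"
      using assms that by (intro mult_left_le) auto
    also have "\<dots> \<le> (1 + T) ^ n"
      using False that by (intro power_mono) auto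
    finally show ?thesis
      by simp
  qed (use T in force)
  then show ?thesis
    by blast
qed

definition poly_exp_multiples :: "('a::euclidean_space \<Rightarrow> complex) \<Rightarrow> ('a \<Rightarrow> complex) set" where
  "poly_exp_multiples q = {f. \<exists>p\<in>poly_fun. f = (\<lambda>y. p y * exp (q y))}"

lemma poly_exp_multiples_has_derivative:
  assumes q: "q \<in> poly_fun" and f: "f \<in> poly_exp_multiples q"
  shows "\<exists>D. (\<forall>x. (f has_derivative D x) (at x)) \<and> (\<forall>v. (\<lambda>x. D x v) \<in> poly_exp_multiples q)"
proof -
  obtain p where p: "p \<in> poly_fun" and fp: "f = (\<lambda>y. p y * exp (q y))"
    using f unfolding poly_exp_multiples_def by blast
  obtain Dp where Dp: "\<forall>x. (p has_derivative Dp x) (at x)" "\<forall>v. (\<lambda>x. Dp x v) \<in> poly_fun"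
    using poly_fun_has_derivative[OF p] by blast
  obtain Dq where Dq: "\<forall>x. (q has_derivative Dq x) (at x)" "\<forall>v. (\<lambda>x. Dq x v) \<in> poly_fun"
    using poly_fun_has_derivative[OF q] by blast
  have "(f has_derivative (\<lambda>h. (Dp x h + p x * Dq x h) * exp (q x))) (at x)" for x
  proof -
    have "((\<lambda>y. exp (q y)) has_derivative (\<lambda>h. exp (q x) * Dq x h)) (at x)"
      by (rule has_derivative_compose[OF Dq(1)[rule_format], of exp "\<lambda>h. exp (q x) * h"])
         (simp add: has_field_derivative_def[symmetric])
    then show ?thesis
      unfolding fp
      by (rule has_derivative_eq_rhs[OF has_derivative_mult[OF Dp(1)[rule_format]]])
         (auto simp: fun_eq_iff algebra_simps)
  qed
  moreover have "(\<lambda>x. (Dp x v + p x * Dq x v) * exp (q x)) \<in> poly_exp_multiples q" for v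
    unfolding poly_exp_multiples_def using Dp Dq p
    by (auto intro!: bexI[of _ "\<lambda>x. Dp x v + p x * Dq x v"] poly_fun.intros)
  ultimately show ?thesis
    by (intro exI[of _ "\<lambda>x h. (Dp x h + p x * Dq x h) * exp (q x)"]) blast
qed

lemma poly_exp_multiples_decay:
  assumes q: "\<And>y. Re (q y) \<le> A - B * norm y ^ 2" and B: "B > 0"
    and f: "f \<in> poly_exp_multiples q"
  shows "\<exists>K. \<forall>y. (1 + norm y) ^ k * cmod (f y) \<le> K"
proof -
  obtain p where p: "p \<in> poly_fun" and fp: "f = (\<lambda>y. p y * exp (q y))"
    using f unfolding poly_exp_multiples_def by blast
  obtain C m where C: "0 \<le> C" "\<forall>y. cmod (p y) \<le> C * (1 + norm y) ^ m"
    using poly_fun_growth[OF p] by blast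
  obtain K where K: "\<forall>t\<ge>0. (1 + t) ^ (k + m) * exp (- B * t\<^sup>2) \<le> K"
    using power_times_gaussian_bounded[OF B] by blast
  have "(1 + norm y) ^ k * cmod (f y) \<le> C * exp A * K" for y
  proof -
    have "(1 + norm y) ^ k * cmod (f y) = (1 + norm y) ^ k * (cmod (p y) * exp (Re (q y)))"
      by (simp add: fp norm_mult)
    also have "\<dots> \<le> (1 + norm y) ^ k * ((C * (1 + norm y) ^ m) * exp (A - B * norm y ^ 2))"
      using C q by (intro mult_left_mono mult_mono) auto
    also have "\<dots> = C * exp A * ((1 + norm y) ^ (k + m) * exp (- B * norm y ^ 2))"
      by (simp add: power_add exp_diff exp_minus field_simps)
    also have "\<dots> \<le> C * exp A * K"
      using K C by (intro mult_left_mono) auto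
    finally show ?thesis .
  qed
  then show ?thesis
    by blast
qed

lemma schwartz_exp_poly_fun:
  assumes q: "q \<in> poly_fun" and "\<And>y. Re (q y) \<le> A - B * norm y ^ 2" "B > 0"
  shows "(\<lambda>y. exp (q y)) \<in> schwartz"
proof (rule schwartz_if_derivative_closed[of _ "poly_exp_multiples q"])
  show "(\<lambda>y. exp (q y)) \<in> poly_exp_multiples q"
    unfolding poly_exp_multiples_def by (intro CollectI bexI[of _ "\<lambda>y. 1"] poly_fun.const) simp
next
  fix g x assume "g \<in> poly_exp_multiples q"
  then show "g differentiable at x"
    using poly_exp_multiples_has_derivative[OF q] unfolding differentiable_def by blast
next
  fix g v assume "g \<in> poly_exp_multiples q"
  then obtain D where "\<forall>x. (g has_derivative D x) (at x)" "\<forall>v. (\<lambda>x. D x v) \<in> poly_exp_multiples q"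
    using poly_exp_multiples_has_derivative[OF q] by blast
  moreover from this have "dirderiv v g = (\<lambda>x. D x v)"
    by (simp add: fun_eq_iff dirderiv_eq_derivative)
  ultimately show "dirderiv v g \<in> poly_exp_multiples q"
    by simp
qed (use assms poly_exp_multiples_decay in blast)

definition gaussian :: "'a::euclidean_space \<Rightarrow> real" where
  "gaussian y = exp (- (y \<bullet> y))"

lemma gaussian_pos: "0 < gaussian y"
  by (simp add: gaussian_def)

lemma schwartz_gaussian: "(\<lambda>y. complex_of_real (gaussian y)) \<in> schwartz"
proof -
  have "(\<lambda>y. (- 1) * complex_of_real (y \<bullet> y)) \<in> poly_fun"
    by (intro poly_fun.mult poly_fun.const poly_fun_inner_self)
  then have "(\<lambda>y. exp ((- 1) * complex_of_real (y \<bullet> y))) \<in> schwartz"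
    by (rule schwartz_exp_poly_fun[where A = 0 and B = 1]) (auto simp: power2_norm_eq_inner)
  then show ?thesis
    by (simp add: gaussian_def exp_of_real flip: of_real_minus)
qed

(* box_coord a c b y lies in (-1, 1) exactly when the b-th coordinate of y lies strictly between
   those of a and c, so the high even powers in box_cutoff a c n approximate the indicator of box a c
   while keeping Gaussian decay. *)

definition box_coord :: "'a::euclidean_space \<Rightarrow> 'a \<Rightarrow> 'a \<Rightarrow> 'a \<Rightarrow> real" where
  "box_coord a c b y = (2 * (y \<bullet> b) - (a \<bullet> b + c \<bullet> b)) / (c \<bullet> b - a \<bullet> b)"

definition box_cutoff :: "'a::euclidean_space \<Rightarrow> 'a \<Rightarrow> nat \<Rightarrow> 'a \<Rightarrow> real" where
  "box_cutoff a c n y = exp (- (\<Sum>b\<in>Basis. box_coord a c b y ^ (2 * n)) - y \<bullet> y)"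

lemma box_cutoff_pos: "0 < box_cutoff a c n y"
  by (simp add: box_cutoff_def)

lemma box_cutoff_le_gaussian: "box_cutoff a c n y \<le> gaussian y"
proof -
  have "0 \<le> (\<Sum>b\<in>Basis. box_coord a c b y ^ (2 * n))"
    by (intro sum_nonneg) (simp add: power_mult)
  then show ?thesis
    by (simp add: box_cutoff_def gaussian_def)
qed

lemma schwartz_box_cutoff: "(\<lambda>y. complex_of_real (box_cutoff a c n y)) \<in> schwartz"
proof -
  define q where "q y = - (\<Sum>b\<in>Basis. complex_of_real (box_coord a c b y) ^ (2 * n)) - of_real (y \<bullet> y)"
    for y :: 'a
  have "box_coord a c b y = 2 / (c \<bullet> b - a \<bullet> b) * (b \<bullet> y) + (- (a \<bullet> b + c \<bullet> b) / (c \<bullet> b - a \<bullet> b))"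
    for b y
    by (simp add: box_coord_def diff_divide_distrib add_divide_distrib inner_commute)
  then have "(\<lambda>y. complex_of_real (box_coord a c b y)) =
      (\<lambda>y. of_real (2 / (c \<bullet> b - a \<bullet> b)) * of_real (b \<bullet> y) + of_real (- (a \<bullet> b + c \<bullet> b) / (c \<bullet> b - a \<bullet> b)))"
    for b
    by (simp only: of_real_add of_real_mult)
  then have "(\<lambda>y. complex_of_real (box_coord a c b y)) \<in> poly_fun" for b
    by (simp only:) (intro poly_fun.intros)
  then have "(\<lambda>y. (- 1) * (\<Sum>b\<in>Basis. complex_of_real (box_coord a c b y) ^ (2 * n)) + (- 1) * of_real (y \<bullet> y))
      \<in> poly_fun"
    by (intro poly_fun.intros poly_fun_sum poly_fun_power poly_fun_inner_self) auto
  then have q: "q \<in> poly_fun"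
    by (simp add: q_def[abs_def])
  have "Re (q y) \<le> 0 - 1 * norm y ^ 2" for y
  proof -
    have "0 \<le> (\<Sum>b\<in>Basis. box_coord a c b y ^ (2 * n))"
      by (intro sum_nonneg) (simp add: power_mult)
    then show ?thesis
      by (simp add: q_def power2_norm_eq_inner flip: of_real_power of_real_sum)
  qed
  then have "(\<lambda>y. exp (q y)) \<in> schwartz"
    by (rule schwartz_exp_poly_fun[OF q]) simp
  moreover have "exp (q y) = complex_of_real (box_cutoff a c n y)" for y
    by (simp add: q_def box_cutoff_def exp_of_real flip: of_real_power of_real_sum of_real_minus of_real_diff)
  ultimately show ?thesis
    by simp
qed

lemma box_coord_inside:
  assumes "a \<bullet> b < y \<bullet> b" "y \<bullet> b < c \<bullet> b"
  shows "\<bar>box_coord a c b y\<bar> < 1"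
proof -
  have "2 * (y \<bullet> b) - (a \<bullet> b + c \<bullet> b) < c \<bullet> b - a \<bullet> b"
    and "- (c \<bullet> b - a \<bullet> b) < 2 * (y \<bullet> b) - (a \<bullet> b + c \<bullet> b)"
    using assms by simp_all
  then show ?thesis
    using assms unfolding box_coord_def by (simp add: abs_less_iff divide_less_eq less_divide_eq)
qed

lemma box_coord_outside:
  assumes "a \<bullet> b < c \<bullet> b" "y \<bullet> b < a \<bullet> b \<or> c \<bullet> b < y \<bullet> b"
  shows "1 < \<bar>box_coord a c b y\<bar>"
proof -
  have width: "0 < c \<bullet> b - a \<bullet> b"
    using assms by simp
  from assms(2) consider "2 * (y \<bullet> b) - (a \<bullet> b + c \<bullet> b) < - (c \<bullet> b - a \<bullet> b)"
    | "c \<bullet> b - a \<bullet> b < 2 * (y \<bullet> b) - (a \<bullet> b + c \<bullet> b)"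
    by fastforce
  then show ?thesis
  proof cases
    case 1
    then have "box_coord a c b y < -1"
      using width unfolding box_coord_def by (simp add: divide_less_eq)
    then show ?thesis
      by simp
  next
    case 2
    then have "1 < box_coord a c b y"
      using width unfolding box_coord_def by (simp add: less_divide_eq)
    then show ?thesis
      by simp
  qed
qed

lemma box_cutoff_tendsto_inside:
  assumes y: "y \<in> box a c"
  shows "(\<lambda>n. box_cutoff a c n y) \<longlonglongrightarrow> gaussian y"
proof -
  have "(\<lambda>n. box_coord a c b y ^ (2 * n)) \<longlonglongrightarrow> 0" if b: "b \<in> Basis" for b
  proof -
    have "\<bar>box_coord a c b y\<bar> < 1"
      using y b by (intro box_coord_inside) (auto simp: mem_box)
    then have "(\<lambda>n. ((box_coord a c b y)\<^sup>2) ^ n) \<longlonglongrightarrow> 0"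
      by (intro LIMSEQ_power_zero) (simp add: abs_square_less_1)
    then show ?thesis
      by (simp add: power_mult)
  qed
  then have "(\<lambda>n. \<Sum>b\<in>Basis. box_coord a c b y ^ (2 * n)) \<longlonglongrightarrow> (\<Sum>b\<in>(Basis::'a set). 0)"
    by (intro tendsto_sum) auto
  then have "(\<lambda>n. exp (- (\<Sum>b\<in>Basis. box_coord a c b y ^ (2 * n)) - y \<bullet> y)) \<longlonglongrightarrow> exp (- 0 - y \<bullet> y)"
    by (intro tendsto_intros) auto
  then show ?thesis
    by (simp add: box_cutoff_def gaussian_def)
qed

lemma box_cutoff_tendsto_outside:
  assumes ac: "\<forall>b\<in>Basis. a \<bullet> b < c \<bullet> b" and y: "y \<notin> cbox a c"
  shows "(\<lambda>n. box_cutoff a c n y) \<longlonglongrightarrow> 0"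
proof -
  obtain b where b: "b \<in> Basis" "y \<bullet> b < a \<bullet> b \<or> c \<bullet> b < y \<bullet> b"
    using y by (auto simp: mem_box not_le)
  define r where "r = (box_coord a c b y)\<^sup>2"
  have r: "1 < r"
    using box_coord_outside[of a b c y] ac b unfolding r_def
    by (metis abs_le_square_iff abs_one linorder_not_le one_power2)
  have "box_cutoff a c n y \<le> (1 / r) ^ n" for n
  proof -
    have "r ^ n = box_coord a c b y ^ (2 * n)"
      by (simp add: r_def power_mult)
    also have "\<dots> \<le> (\<Sum>b\<in>Basis. box_coord a c b y ^ (2 * n))"
      using b(1) by (intro member_le_sum) (simp_all add: power_mult)
    finally have "r ^ n \<le> (\<Sum>b\<in>Basis. box_coord a c b y ^ (2 * n))" .
    then have "- (\<Sum>b\<in>Basis. box_coord a c b y ^ (2 * n)) - y \<bullet> y \<le> - (r ^ n)"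
      using inner_ge_zero[of y] by linarith
    then have "box_cutoff a c n y \<le> exp (- (r ^ n))"
      unfolding box_cutoff_def by simp
    also have "\<dots> \<le> 1 / r ^ n"
    proof -
      have "r ^ n \<le> exp (r ^ n)"
        using exp_ge_add_one_self[of "r ^ n"] by linarith
      then show ?thesis
        using r by (simp add: exp_minus field_simps)
    qed
    finally show ?thesis
      by (simp add: power_one_over)
  qed
  then have upper: "\<forall>\<^sub>F n in sequentially. box_cutoff a c n y \<le> (1 / r) ^ n"
    by simp
  have lower: "\<forall>\<^sub>F n in sequentially. 0 \<le> box_cutoff a c n y"
    by (rule always_eventually) (simp add: less_imp_le box_cutoff_pos)
  have "(\<lambda>n. (1 / r) ^ n) \<longlonglongrightarrow> 0"
    using r by (intro LIMSEQ_power_zero) simp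
  then show ?thesis
    using tendsto_sandwich[OF lower upper tendsto_const] by blast
qed

lemma lborel_cbox_diff_box_null: "cbox a c - box a c \<in> null_sets lborel"
proof (cases "\<forall>b\<in>Basis. a \<bullet> b \<le> c \<bullet> b")
  case True
  have "emeasure lborel (cbox a c - box a c) = emeasure lborel (cbox a c) - emeasure lborel (box a c)"
    by (rule emeasure_Diff) (auto simp: emeasure_lborel_box_eq box_subset_cbox)
  also have "\<dots> = 0"
    using True by (simp add: emeasure_lborel_box_eq emeasure_lborel_cbox_eq)
  finally show ?thesis
    by auto
next
  case False
  then have "cbox a c = {}"
    by (auto simp: box_eq_empty not_le)
  then show ?thesis
    by simp
qed

lemma box_cutoff_tendsto_ae:
  assumes "\<forall>b\<in>Basis. a \<bullet> b < c \<bullet> b"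
  shows "AE y in lborel. (\<lambda>n. box_cutoff a c n y) \<longlonglongrightarrow> indicator (box a c) y * gaussian y"
  using AE_not_in[OF lborel_cbox_diff_box_null[of a c]]
proof eventually_elim
  case (elim y)
  show ?case
  proof (cases "y \<in> box a c")
    case True
    then show ?thesis
      using box_cutoff_tendsto_inside by simp
  next
    case False
    then have "y \<notin> cbox a c"
      using elim by blast
    then show ?thesis
      using False box_cutoff_tendsto_outside[OF assms] by simp
  qed
qed

lemma schwartz_annihilator_box_integral:
  fixes h :: "'a::euclidean_space \<Rightarrow> complex"
  assumes hm: "h \<in> borel_measurable lborel"
    and hi: "\<And>f. f \<in> schwartz \<Longrightarrow> integrable lborel (\<lambda>x. h x * f x)"
    and h0: "\<And>f. f \<in> schwartz \<Longrightarrow> (\<integral>x. h x * f x \<partial>lborel) = 0"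
  shows "(\<integral>y. indicator (box a c) y *\<^sub>R (h y * gaussian y) \<partial>lborel) = 0"
proof (cases "\<forall>b\<in>Basis. a \<bullet> b < c \<bullet> b")
  case False
  then have "box a c = {}"
    by (auto simp: box_eq_empty not_less)
  then show ?thesis
    by simp
next
  case ac: True
  define s where "s n y = h y * box_cutoff a c n y" for n y
  define f where "f y = indicator (box a c) y *\<^sub>R (h y * gaussian y)" for y
  have [measurable]: "h \<in> borel_measurable borel"
    using hm by simp
  have [measurable]: "(\<lambda>y. box_cutoff a c n y) \<in> borel_measurable lborel" for n
    unfolding box_cutoff_def box_coord_def by measurable
  have [measurable]: "gaussian \<in> borel_measurable lborel"
    unfolding gaussian_def by measurable
  have "(\<lambda>n. integral\<^sup>L lborel (s n)) \<longlonglongrightarrow> integral\<^sup>L lborel f"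
  proof (rule integral_dominated_convergence[where w = "\<lambda>y. norm (h y * gaussian y)"])
    show "integrable lborel (\<lambda>y. norm (h y * gaussian y))"
      using hi[OF schwartz_gaussian] by (rule integrable_norm)
    show "AE y in lborel. (\<lambda>n. s n y) \<longlonglongrightarrow> f y"
      using box_cutoff_tendsto_ae[OF ac]
    proof eventually_elim
      case (elim y)
      then have "(\<lambda>n. h y * box_cutoff a c n y) \<longlonglongrightarrow> h y * (indicator (box a c) y * gaussian y)"
        by (intro tendsto_mult tendsto_const tendsto_of_real)
      then show ?case
        by (simp add: s_def f_def scaleR_conv_of_real mult_ac)
    qed
    show "AE y in lborel. norm (s n y) \<le> norm (h y * gaussian y)" for n
    proof (intro AE_I2)
      fix y
      have "cmod (h y) * box_cutoff a c n y \<le> cmod (h y) * gaussian y"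
        by (intro mult_left_mono box_cutoff_le_gaussian) simp
      then show "norm (s n y) \<le> norm (h y * gaussian y)"
        using box_cutoff_pos[of a c n y] gaussian_pos[of y] by (simp add: s_def norm_mult)
    qed
  qed (unfold s_def f_def, measurable)
  moreover have "integral\<^sup>L lborel (s n) = 0" for n
    unfolding s_def by (rule h0[OF schwartz_box_cutoff])
  ultimately have "integral\<^sup>L lborel f = 0"
    by (simp add: LIMSEQ_const_iff)
  then show ?thesis
    by (simp add: f_def[abs_def])
qed

lemma sets_borel_eq_sigma_boxes:
  "sets (borel :: 'a::euclidean_space measure) = sigma_sets UNIV (range (\<lambda>(a, b). box a b))"
  by (subst borel_eq_box) (rule sets_measure_of, auto)

lemma integrable_ae_zero_if_box_integrals_zero:
  fixes H :: "'a::euclidean_space \<Rightarrow> 'b::{second_countable_topology, banach}"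
  assumes H: "integrable lborel H" and H0: "integral\<^sup>L lborel H = 0"
    and boxes: "\<And>a c. set_lebesgue_integral lborel (box a c) H = 0"
  shows "AE x in lborel. H x = 0"
proof (rule sigma_finite_measure.density_zero[OF sigma_finite_lborel H])
  let ?E = "range (\<lambda>(a, b). box a b) :: 'a set set"
  fix A :: "'a set" assume "A \<in> sets lborel"
  then have "Int_stable ?E" "?E \<subseteq> Pow UNIV" "A \<in> sigma_sets UNIV ?E"
    by (simp_all only: sets_lborel sets_borel_eq_sigma_boxes) (auto simp: Int_stable_def box_Int_box)
  then show "set_lebesgue_integral lborel A H = 0"
  proof (induction rule: sigma_sets_induct_disjoint)
    case (basic B)
    then show ?case
      using boxes by auto
  next
    case empty
    show ?case
      by (simp add: set_lebesgue_integral_def)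
  next
    case (compl B)
    then have "B \<in> sets lborel"
      by (simp only: sets_lborel sets_borel_eq_sigma_boxes)
    have "set_lebesgue_integral lborel (UNIV - B) H = (\<integral>x. H x - indicator B x *\<^sub>R H x \<partial>lborel)"
      unfolding set_lebesgue_integral_def
      by (intro Bochner_Integration.integral_cong) (auto simp: indicator_def)
    also have "\<dots> = integral\<^sup>L lborel H - set_lebesgue_integral lborel B H"
      unfolding set_lebesgue_integral_def
      by (intro Bochner_Integration.integral_diff H integrable_mult_indicator \<open>B \<in> sets lborel\<close>)
    finally show ?case
      using H0 compl.IH by simp
  next
    case (union B)
    then have B: "\<And>i. B i \<in> sets lborel"
      by (simp only: sets_lborel sets_borel_eq_sigma_boxes) blast
    have "set_integrable lborel (\<Union>i. B i) H"
      unfolding set_integrable_def using B by (intro integrable_mult_indicator H) auto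
    then have "set_lebesgue_integral lborel (\<Union>i. B i) H = (\<Sum>i. set_lebesgue_integral lborel (B i) H)"
      using union.hyps(1) B by (intro lebesgue_integral_countable_add) (auto simp: disjoint_family_on_def)
    then show ?case
      using union.IH by simp
  qed
qed

lemma schwartz_annihilator_ae_zero:
  fixes h :: "'a::euclidean_space \<Rightarrow> complex"
  assumes hm: "h \<in> borel_measurable lborel"
    and hi: "\<And>f. f \<in> schwartz \<Longrightarrow> integrable lborel (\<lambda>x. h x * f x)"
    and h0: "\<And>f. f \<in> schwartz \<Longrightarrow> (\<integral>x. h x * f x \<partial>lborel) = 0"
  shows "AE x in lborel. h x = 0"
proof -
  have "AE x in lborel. h x * gaussian x = 0"
    using schwartz_annihilator_box_integral[OF hm hi h0]
    by (intro integrable_ae_zero_if_box_integrals_zero hi h0 schwartz_gaussian)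
       (simp add: set_lebesgue_integral_def)
  then show ?thesis
    by eventually_elim (metis gaussian_pos less_irrefl mult_eq_0_iff of_real_eq_0_iff)
qed

lemma lborel_translate_measurable [measurable]: "((+) (c::'a::euclidean_space)) \<in> measurable borel borel"
  by (intro borel_measurable_continuous_onI continuous_intros)

lemma integrable_lborel_translate_iff:
  fixes F :: "'a::euclidean_space \<Rightarrow> 'b::{banach, second_countable_topology}"
  assumes [measurable]: "F \<in> borel_measurable borel"
  shows "integrable lborel (\<lambda>t. F (c + t)) \<longleftrightarrow> integrable lborel F"
  using integrable_distr_eq[of "(+) c" lborel borel F] by (simp add: lborel_distr_plus)

lemma integral_lborel_translate:
  fixes F :: "'a::euclidean_space \<Rightarrow> 'b::{banach, second_countable_topology}"
  assumes [measurable]: "F \<in> borel_measurable borel"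
  shows "(\<integral>t. F (c + t) \<partial>lborel) = integral\<^sup>L lborel F"
  using integral_distr[of "(+) c" lborel borel F] by (simp add: lborel_distr_plus)

lemma AE_lborel_translate:
  fixes c :: "'a::euclidean_space"
  assumes [measurable]: "Measurable.pred borel P" and "AE z in lborel. P z"
  shows "AE t in lborel. P (c + t)"
proof -
  have "AE z in distr lborel borel ((+) c). P z"
    unfolding lborel_distr_plus[of c] using assms(2) .
  then show ?thesis
    by (subst (asm) AE_distr_iff) auto
qed

lemma point_eval_tempered: "(\<lambda>f. if f \<in> schwartz then f y else 0) \<in> tempered"
  unfolding tempered_def
proof (intro CollectI conjI ballI allI impI)
  have "cmod (f y) \<le> 1 * schwartz_seminorm 0 f" if f: "f \<in> schwartz" for f
  proof -
    have "{vs::'a list. set vs \<subseteq> Basis \<and> length vs \<le> 0} = {[]}"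
      by auto
    then have "schwartz_seminorm 0 f = (SUP x. cmod (f x))"
      unfolding schwartz_seminorm_def by simp
    moreover obtain B where "\<forall>x. (1 + norm x) ^ 0 * cmod (iter_pderiv [] f x) \<le> B"
      using schwartz_decay[OF f, of "[]" 0] by auto
    then have "cmod (f y) \<le> (SUP x. cmod (f x))"
      by (intro cSUP_upper bdd_aboveI2) auto
    ultimately show ?thesis
      by simp
  qed
  then show "\<exists>C N. \<forall>f\<in>schwartz. cmod (if f \<in> schwartz then f y else 0) \<le> C * schwartz_seminorm N f"
    by (intro exI[of _ 1] exI[of _ 0]) simp
qed (auto simp: schwartz_add schwartz_cmult)

lemma weak_star_dense_eigen_extends:
  assumes dense: "weak_star_dense A" and eigen: "\<forall>v\<in>A. rho_dist l v = (\<lambda>f. k * v f)"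
    and u: "u \<in> tempered"
  shows "rho_dist l u = (\<lambda>f. k * u f)"
proof
  fix f :: "'a \<Rightarrow> complex"
  show "rho_dist l u f = k * u f"
  proof (cases "f \<in> schwartz")
    case f: True
    define g where "g = rho (- fst l, snd l) f"
    have g: "g \<in> schwartz"
      unfolding g_def using f by (rule schwartz_rho)
    have "cmod (u g - k * u f) \<le> e" if e: "e > 0" for e
    proof -
      define e' where "e' = e / (1 + cmod k)"
      have e': "e' > 0"
        using e by (simp add: e'_def add_pos_nonneg)
      obtain v where v: "v \<in> A" and close: "\<forall>h\<in>{f, g}. cmod (u h - v h) < e'"
        using dense u f g e' unfolding weak_star_dense_def by (metis empty_subsetI finite.intros insert_subset)
      have "v g = k * v f"
        using fun_cong[OF bspec[OF eigen v], of f] f by (simp add: rho_dist_apply g_def)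
      then have "u g - k * u f = (u g - v g) + k * (v f - u f)"
        by (simp add: algebra_simps)
      then have "cmod (u g - k * u f) \<le> cmod (u g - v g) + cmod k * cmod (v f - u f)"
        by (metis norm_mult norm_triangle_ineq)
      also have "\<dots> \<le> e' + cmod k * e'"
        using close by (intro add_mono mult_left_mono) (auto simp: norm_minus_commute less_imp_le)
      also have "\<dots> = e' * (1 + cmod k)"
        by (simp add: algebra_simps)
      also have "\<dots> = e"
        by (simp add: e'_def add_nonneg_eq_0_iff)
      finally show ?thesis .
    qed
    then have "u g = k * u f"
      using field_le_epsilon[of "cmod (u g - k * u f)" 0] by simp
    then show ?thesis
      using f by (simp add: rho_dist_apply g_def)
  qed (simp add: rho_dist_apply tempered_outside[OF u])
qed

lemma rho_dist_common_eigen_imp_zero: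
  assumes eigen: "\<forall>u\<in>tempered. rho_dist (x, w) u = (\<lambda>f. k * u f)"
  shows "(x, w) = (0 :: 'a::euclidean_space \<times> 'a)"
proof -
  have shifted: "e2pi (w \<bullet> (y + (1/2) *\<^sub>R x)) * gaussian (y + x) = k * gaussian y" for y
  proof -
    have "rho_dist (x, w) (\<lambda>f. if f \<in> schwartz then f y else 0) =
        (\<lambda>f. k * (if f \<in> schwartz then f y else 0))"
      using eigen point_eval_tempered by blast
    from fun_cong[OF this, of "\<lambda>y. gaussian y"]
    have "rho (- x, w) (\<lambda>y. gaussian y) y = k * gaussian y"
      using schwartz_rho[OF schwartz_gaussian, of "(- x, w)"] by (simp add: rho_dist_apply schwartz_gaussian)
    then show ?thesis
      by (simp add: rho_apply)
  qed
  have norm_shifted: "gaussian (y + x) = cmod k * gaussian y" for y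
    using arg_cong[OF shifted[of y], of norm] gaussian_pos[of y] gaussian_pos[of "y + x"]
    by (simp add: norm_mult)
  have "gaussian x * gaussian x = 1"
    using norm_shifted[of 0] norm_shifted[of "- x"] by (simp add: gaussian_def)
  then have "x = 0"
    by (simp add: gaussian_def flip: exp_add)
  then have phase: "e2pi (w \<bullet> y) = k" for y
    using shifted[of y] gaussian_pos[of y] by simp
  have "w = 0"
  proof (rule ccontr)
    assume "w \<noteq> 0"
    then have "w \<bullet> ((1 / (2 * (w \<bullet> w))) *\<^sub>R w) = 1/2"
      by simp
    then have "e2pi (w \<bullet> ((1 / (2 * (w \<bullet> w))) *\<^sub>R w)) = -1"
      by (simp only: e2pi_half)
    then show False
      using phase[of 0] phase[of "(1 / (2 * (w \<bullet> w))) *\<^sub>R w"] by simp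
  qed
  with \<open>x = 0\<close> show ?thesis
    by (simp add: zero_prod_def)
qed

lemma rho_dist_eigen_ae:
  fixes g :: "'a::euclidean_space \<Rightarrow> complex"
  assumes gm: "g \<in> borel_measurable lborel"
    and represents: "\<forall>f\<in>schwartz. integrable lborel (\<lambda>x. g x * f x) \<and> u f = (\<integral>x. g x * f x \<partial>lborel)"
    and eigen: "rho_dist (x, w) u = (\<lambda>f. k * u f)"
  shows "AE z in lborel. g (z - x) * e2pi (w \<bullet> (z - (1/2) *\<^sub>R x)) = k * g z"
proof -
  have [measurable]: "g \<in> borel_measurable borel"
    using gm by simp
  define h where "h z = g (z - x) * e2pi (w \<bullet> (z - (1/2) *\<^sub>R x)) - k * g z" for z
  have h: "integrable lborel (\<lambda>z. h z * f z) \<and> (\<integral>z. h z * f z \<partial>lborel) = 0" if f: "f \<in> schwartz" for f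
  proof -
    define F where "F t = g t * rho (- x, w) f t" for t
    have "rho (- x, w) f \<in> schwartz"
      using f by (rule schwartz_rho)
    then have F: "integrable lborel F" "u (rho (- x, w) f) = integral\<^sup>L lborel F"
      using represents by (simp_all add: F_def[abs_def])
    have [measurable]: "F \<in> borel_measurable borel"
      using borel_measurable_integrable[OF F(1)] by simp
    have hf: "(\<lambda>z. h z * f z) = (\<lambda>z. F (- x + z) - k * (g z * f z))"
      by (simp add: h_def F_def rho_apply fun_eq_iff algebra_simps inner_simps)
    have "integrable lborel (\<lambda>z. F (- x + z))"
      using F(1) integrable_lborel_translate_iff[of F "- x"] by simp
    moreover have "(\<integral>z. F (- x + z) \<partial>lborel) = u (rho (- x, w) f)"
      using F(2) integral_lborel_translate[of F "- x"] by simp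
    moreover have "u (rho (- x, w) f) = k * u f"
      using fun_cong[OF eigen, of f] f by (simp add: rho_dist_apply)
    ultimately show ?thesis
      using represents f unfolding hf by simp
  qed
  have "AE z in lborel. h z = 0"
    by (rule schwartz_annihilator_ae_zero) (use h in \<open>auto simp: h_def\<close>)
  then show ?thesis
    by eventually_elim (simp add: h_def)
qed

lemma translate_scaled_factor_eq_one:
  fixes P :: "'a::euclidean_space \<Rightarrow> real"
  assumes [measurable]: "P \<in> borel_measurable borel"
    and P: "integrable lborel P" "\<And>z. 0 \<le> P z" "\<not> (AE z in lborel. P z = 0)"
    and scaled: "AE z in lborel. P (z - x) = c * P z"
  shows "c = 1"
proof -
  have "integral\<^sup>L lborel P = (\<integral>z. P (- x + z) \<partial>lborel)"
    using integral_lborel_translate[of P "- x"] by simp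
  also have "\<dots> = (\<integral>z. c * P z \<partial>lborel)"
    using scaled by (intro integral_cong_AE) auto
  also have "\<dots> = c * integral\<^sup>L lborel P"
    by simp
  finally have "integral\<^sup>L lborel P = c * integral\<^sup>L lborel P" .
  moreover have "integral\<^sup>L lborel P \<noteq> 0"
    using integral_nonneg_eq_0_iff_AE[OF P(1)] P(2,3) by simp
  ultimately show ?thesis
    by simp
qed

lemma tendsto_integral_indicator_ball_translate:
  fixes P :: "'a::euclidean_space \<Rightarrow> real"
  assumes [measurable]: "P \<in> borel_measurable borel" and P: "integrable lborel P" and x: "x \<noteq> 0"
  shows "(\<lambda>n. \<integral>t. indicator (ball 0 R) (real n *\<^sub>R x + t) * P t \<partial>lborel) \<longlonglongrightarrow> 0"
proof -
  define s where "s n t = indicator (ball 0 R) (real n *\<^sub>R x + t) * P t" for n t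
  have lim: "AE t in lborel. (\<lambda>n. s n t) \<longlonglongrightarrow> 0"
  proof (intro AE_I2 tendsto_eventually)
    fix t :: 'a
    obtain N :: nat where N: "(R + norm t) / norm x < real N"
      using reals_Archimedean2 by blast
    have "R < norm (real n *\<^sub>R x + t)" if "n \<ge> N" for n
    proof -
      have "(R + norm t) / norm x < real n"
        using N that by (meson less_le_trans of_nat_le_iff)
      then have "R + norm t < real n * norm x"
        using x by (simp add: field_simps)
      then show ?thesis
        using norm_triangle_ineq2[of "real n *\<^sub>R x" "- t"] by simp
    qed
    then show "\<forall>\<^sub>F n in sequentially. s n t = 0"
      unfolding eventually_sequentially s_def by (intro exI[of _ N]) (fastforce simp: indicator_def)
  qed
  have bound: "AE t in lborel. norm (s n t) \<le> norm (P t)" for n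
    by (intro AE_I2) (simp add: s_def indicator_def)
  have s: "s n \<in> borel_measurable lborel" for n
  proof -
    have [measurable]: "P \<in> borel_measurable lborel" "ball 0 R \<in> sets borel"
      by simp_all
    show ?thesis
      unfolding s_def by measurable
  qed
  have "(\<lambda>n. integral\<^sup>L lborel (s n)) \<longlonglongrightarrow> 0"
    using integral_dominated_convergence[OF borel_measurable_const s integrable_norm[OF P] lim bound] by simp
  then show ?thesis
    by (simp add: s_def[abs_def])
qed

lemma AE_translation_invariant_multiple:
  fixes P :: "'a::euclidean_space \<Rightarrow> 'b"
  assumes invariant: "AE z in lborel. P (z - x) = P z"
    and measurable: "\<And>n. Measurable.pred borel (\<lambda>z. P (z - real n *\<^sub>R x) = P z)"
  shows "AE z in lborel. P (z - real n *\<^sub>R x) = P z"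
proof (induction n)
  case (Suc n)
  have "AE t in lborel. P ((- x + t) - real n *\<^sub>R x) = P (- x + t)"
    by (rule AE_lborel_translate[OF measurable Suc.IH])
  then show ?case
    using invariant by eventually_elim (simp add: algebra_simps)
qed simp

lemma translation_invariant_integrable_ae_zero:
  fixes P :: "'a::euclidean_space \<Rightarrow> real"
  assumes [measurable]: "P \<in> borel_measurable borel"
    and P: "integrable lborel P" "\<And>z. 0 \<le> P z" and x: "x \<noteq> 0"
    and invariant: "AE z in lborel. P (z - x) = P z"
  shows "AE z in lborel. P z = 0"
proof -
  have iterated: "AE z in lborel. P (z - real n *\<^sub>R x) = P z" for n
    using invariant by (rule AE_translation_invariant_multiple) measurable
  have ball: "(\<integral>z. indicator (ball 0 R) z * P z \<partial>lborel) = 0" for R :: real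
  proof -
    have [measurable]: "ball 0 R \<in> sets borel"
      by simp
    have "(\<integral>z. indicator (ball 0 R) z * P z \<partial>lborel) =
        (\<integral>t. indicator (ball 0 R) (real n *\<^sub>R x + t) * P t \<partial>lborel)" for n
    proof -
      have "(\<integral>z. indicator (ball 0 R) z * P z \<partial>lborel) =
          (\<integral>z. indicator (ball 0 R) z * P (z - real n *\<^sub>R x) \<partial>lborel)"
        using iterated[of n] by (intro integral_cong_AE) (measurable, auto)
      also have "\<dots> = (\<integral>t. indicator (ball 0 R) (real n *\<^sub>R x + t) * P t \<partial>lborel)"
        using integral_lborel_translate[of "\<lambda>z. indicator (ball 0 R) z * P (z - real n *\<^sub>R x)" "real n *\<^sub>R x"]
        by simp
      finally show ?thesis .
    qed
    then show ?thesis
      using tendsto_integral_indicator_ball_translate[OF _ P(1) x, of R] by (simp add: LIMSEQ_const_iff)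
  qed
  have "AE z in lborel. indicator (ball 0 (real m)) z * P z = 0" for m :: nat
    using integral_nonneg_eq_0_iff_AE[of lborel "\<lambda>z. indicator (ball 0 (real m)) z * P z"]
      integrable_mult_indicator[OF _ P(1), of "ball 0 (real m)"] ball[of "real m"] P(2)
    by simp
  then have "AE z in lborel. \<forall>m::nat. indicator (ball 0 (real m)) z * P z = 0"
    unfolding AE_all_countable by blast
  then show ?thesis
  proof eventually_elim
    case (elim z)
    obtain m :: nat where "norm z < real m"
      using reals_Archimedean2 by blast
    then show ?case
      using elim[rule_format, of m] by simp
  qed
qed

lemma e2pi_eq_iff: "e2pi s = e2pi t \<longleftrightarrow> (\<exists>n::int. s = t + of_int n)"
proof -
  have "2 * of_real pi * \<i> * of_real s = 2 * of_real pi * \<i> * of_real t + of_int (2 * n) * of_real pi * \<i>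
      \<longleftrightarrow> (2 * pi) * s = (2 * pi) * (t + of_int n)" for n :: int
    by (simp add: complex_eq_iff algebra_simps)
  then show ?thesis
    unfolding e2pi_def exp_eq by simp
qed

lemma e2pi_level_set_null:
  fixes w :: "'a::euclidean_space"
  assumes "w \<noteq> 0"
  shows "{z. e2pi (w \<bullet> z) = k} \<in> null_sets lborel"
proof (cases "\<exists>z0. e2pi (w \<bullet> z0) = k")
  case True
  then obtain z0 where z0: "e2pi (w \<bullet> z0) = k"
    by blast
  define N where "N = (\<Union>n::int. {z. w \<bullet> z = w \<bullet> z0 + of_int n})"
  have "negligible N"
    unfolding N_def using assms by (intro negligible_countable_Union) (auto intro!: negligible_hyperplane)
  moreover have "N \<in> sets borel"
    unfolding N_def by measurable
  ultimately have "N \<in> null_sets lborel"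
    by (auto simp: null_sets_completion_iff negligible_iff_null_sets)
  moreover have "{z. e2pi (w \<bullet> z) = k} \<in> sets lborel"
    by measurable
  moreover have "{z. e2pi (w \<bullet> z) = k} \<subseteq> N"
  proof
    fix z assume "z \<in> {z. e2pi (w \<bullet> z) = k}"
    then have "e2pi (w \<bullet> z) = e2pi (w \<bullet> z0)"
      using z0 by simp
    then obtain n :: int where "w \<bullet> z = w \<bullet> z0 + of_int n"
      unfolding e2pi_eq_iff by blast
    then show "z \<in> N"
      unfolding N_def by blast
  qed
  ultimately show ?thesis
    by (rule null_sets_subset)
qed simp

lemma ae_phase_eigen_imp_zero:
  fixes g :: "'a::euclidean_space \<Rightarrow> complex"
  assumes "\<not> (AE z in lborel. g z = 0)" and "AE z in lborel. g z * e2pi (w \<bullet> z) = k * g z"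
  shows "w = 0"
proof (rule ccontr)
  assume "w \<noteq> 0"
  have "AE z in lborel. g z = 0"
    using assms(2) AE_not_in[OF e2pi_level_set_null[OF \<open>w \<noteq> 0\<close>, of k]]
  proof eventually_elim
    case (elim z)
    then have "g z * (e2pi (w \<bullet> z) - k) = 0" and "e2pi (w \<bullet> z) - k \<noteq> 0"
      by (simp_all add: algebra_simps)
    then show ?case
      by simp
  qed
  then show False
    using assms(1) by simp
qed

lemma representing_function_nonzero:
  fixes g :: "'a::euclidean_space \<Rightarrow> complex"
  assumes represents: "\<forall>f\<in>schwartz. integrable lborel (\<lambda>x. g x * f x) \<and> u f = (\<integral>x. g x * f x \<partial>lborel)"
    and u: "u \<in> tempered" "u \<noteq> (\<lambda>f. 0)"
  shows "\<not> (AE z in lborel. g z = 0)"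
proof
  assume "AE z in lborel. g z = 0"
  then have gf: "AE z in lborel. g z * f z = 0" for f :: "'a \<Rightarrow> complex"
    by eventually_elim simp
  have "u f = 0" for f
  proof (cases "f \<in> schwartz")
    case True
    then show ?thesis
      using represents integral_eq_zero_AE[OF gf[of f]] by simp
  qed (simp add: tempered_outside[OF u(1)])
  then show False
    using u(2) by auto
qed

lemma rho_dist_eigen_Lp_imp_zero:
  assumes u: "u \<in> tempered" "u \<noteq> (\<lambda>f. 0)" and p: "0 < p" and Lp: "dist_in_Lp p u"
    and eigen: "rho_dist (x, w) u = (\<lambda>f. k * u f)"
  shows "(x, w) = (0 :: 'a::euclidean_space \<times> 'a)"
proof -
  obtain g :: "'a \<Rightarrow> complex" where gm: "g \<in> borel_measurable lborel"
    and gp: "integrable lborel (\<lambda>x. cmod (g x) powr p)"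
    and represents: "\<forall>f\<in>schwartz. integrable lborel (\<lambda>x. g x * f x) \<and> u f = (\<integral>x. g x * f x \<partial>lborel)"
    using Lp unfolding dist_in_Lp_def by blast
  have [measurable]: "g \<in> borel_measurable borel"
    using gm by simp
  have g_nonzero: "\<not> (AE z in lborel. g z = 0)"
    using represents u by (rule representing_function_nonzero)
  have ae: "AE z in lborel. g (z - x) * e2pi (w \<bullet> (z - (1/2) *\<^sub>R x)) = k * g z"
    by (rule rho_dist_eigen_ae[OF gm represents eigen])
  define P where "P z = cmod (g z) powr p" for z
  have P_measurable [measurable]: "P \<in> borel_measurable borel"
    unfolding P_def by measurable
  have P: "integrable lborel P" "\<And>z. 0 \<le> P z" "\<not> (AE z in lborel. P z = 0)"
    using gp g_nonzero by (simp_all add: P_def[abs_def])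
  have norm_ae: "AE z in lborel. cmod (g (z - x)) = cmod k * cmod (g z)"
    using ae by eventually_elim (metis mult_cancel_left1 norm_e2pi norm_mult)
  then have "AE z in lborel. P (z - x) = cmod k powr p * P z"
    by eventually_elim (simp add: P_def powr_mult)
  then have "cmod k powr p = 1"
    by (rule translate_scaled_factor_eq_one[OF P_measurable P])
  then have k: "cmod k = 1"
    using p powr_eq_one_iff_gen[of "cmod k" p] by (cases "k = 0") auto
  have "x = 0"
  proof (rule ccontr)
    assume "x \<noteq> 0"
    moreover have "AE z in lborel. P (z - x) = P z"
      using norm_ae by eventually_elim (simp add: P_def k)
    ultimately have "AE z in lborel. P z = 0"
      using translation_invariant_integrable_ae_zero[OF P_measurable P(1,2)] by simp
    then show False
      using P(3) by simp
  qed
  moreover have "w = 0"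
    using ae \<open>x = 0\<close> by (intro ae_phase_eigen_imp_zero[OF g_nonzero]) simp
  ultimately show ?thesis
    by (simp add: zero_prod_def)
qed

theorem proposition5p1:
  fixes T :: "('a::euclidean_space \<Rightarrow> complex) \<Rightarrow> (('a \<Rightarrow> complex) \<Rightarrow> complex)"
    and \<Phi> :: "'a \<times> 'a \<Rightarrow> 'a \<times> 'a"
  assumes dim: "even DIM('a)"
    and maps: "\<forall>F\<in>schwartz. T F \<in> tempered"
    and lin_add: "\<forall>F\<in>schwartz. \<forall>G\<in>schwartz. T (\<lambda>x. F x + G x) = (\<lambda>f. T F f + T G f)"
    and lin_smult: "\<forall>F\<in>schwartz. \<forall>c. T (\<lambda>x. c * F x) = (\<lambda>f. c * T F f)"
    and nonzero: "\<exists>F\<in>schwartz. T F \<noteq> (\<lambda>f. 0)"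
    and covar: "\<forall>l. \<exists>c::complex. \<forall>F\<in>schwartz.
                   T (rho l F) = (\<lambda>f. c * rho_dist (\<Phi> l) (T F) f)"
    and extra: "(\<exists>F\<in>schwartz. T F \<noteq> (\<lambda>f. 0) \<and> (\<exists>p::real. 1 \<le> p \<and> dist_in_Lp p (T F)))
                \<or> weak_star_dense (T ` schwartz)"
  shows "\<forall>l1 l2. \<Phi> (l1 + l2) = \<Phi> l1 + \<Phi> l2"
proof (intro allI)
  fix l1 l2
  obtain x w where defect: "\<Phi> (l1 + l2) - (\<Phi> l1 + \<Phi> l2) = (x, w)"
    by fastforce
  obtain k where k: "\<forall>F\<in>schwartz. rho_dist (x, w) (T F) = (\<lambda>f. k * T F f)"
    using rho_dist_additivity_defect[OF maps lin_smult nonzero covar, of l1 l2] defect by auto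
  from extra have "(x, w) = 0"
  proof
    assume "\<exists>F\<in>schwartz. T F \<noteq> (\<lambda>f. 0) \<and> (\<exists>p::real. 1 \<le> p \<and> dist_in_Lp p (T F))"
    then obtain F p where F: "F \<in> schwartz" "T F \<noteq> (\<lambda>f. 0)" "1 \<le> p" "dist_in_Lp p (T F)"
      by blast
    show ?thesis
      using F maps k by (intro rho_dist_eigen_Lp_imp_zero[of "T F" p]) auto
  next
    assume dense: "weak_star_dense (T ` schwartz)"
    have "\<forall>v\<in>T ` schwartz. rho_dist (x, w) v = (\<lambda>f. k * v f)"
      using k by blast
    then show ?thesis
      using weak_star_dense_eigen_extends[OF dense] by (intro rho_dist_common_eigen_imp_zero) blast
  qed
  then show "\<Phi> (l1 + l2) = \<Phi> l1 + \<Phi> l2"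
    using defect by simp
qed

end
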